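(* Let $\mathcal{R}$ be a left-connected rewriting system over a signature $\Sigma$, let $L_1$ and $L_2$ be the left-hand sides of two rules of $\mathcal{R}$, and let $(g_1,g_2\colon G\to L_1+L_2)$ be a gluing scheme that yields a pre-critical pair, in which a node $A$ of $L_1$ and a node $B$ of $L_2$ are glued. Then: (1) if $A\in out(L_1)$ and $B\in in(L_2)$, then no node of $in(L_1)$ is glued to a node of $out(L_2)$; (2) if $A\in in(L_1)$ and $B\in out(L_2)$, then no node of $out(L_1)$ is glued to a node of $in(L_2)$.
   Context: A signature $\Sigma$ is a set of triples $(x,n,m)$ (label, arity, coarity). A $\Sigma$-hypergraph $G=(V,E,s,t,l)$ has finite sets $V$ (nodes), $E$ (hyperedges), maps $s,t\colon E\to V^*$ (lists of sources/targets) and a labelling $l\colon E\to\Sigma$ sending a hyperedge with $n$ sources and $m$ targets to some $(x,n,m)$. Morphisms preserve sources, targets and labels; they form the category $\mathbf{Hyp}_\Sigma$, where colimits are computed componentwise and monos/epis are injective/surjective on nodes and hyperedges. Composition is written $f;g$; $\iota_1,\iota_2$ are coprojections. A hypergraph is discrete if it has no hyperedges. A path is a list of hyperedges $[e_1,\dots,e_n]$ with some target of $e_k$ equal to a source of $e_{k+1}$ for each $k$; it goes from $v$ to $v'$ if $v$ is a source of $e_1$ and $v'$ a target of $e_n$; a cycle is a path with some source of $e_1$ a target of $e_n$. In-degree (out-degree) of a node $v$: number of pairs $(e,i)$ with $v$ the $i$-th target (source) of $e$; $in(H)$, $out(H)$: nodes of in-degree $0$, out-degree $0$. $H$ is ma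 (monogamous acyclic) if it has no cycle and all in- and out-degrees are $\le 1$. A cospan $I\to H\leftarrow O$ with $I,O$ discrete is an ma-cospan if $H$ is ma and the legs are mono with images $in(H)$ and $out(H)$. $H$ is strongly connected if for all $x\in in(H)$, $y\in out(H)$ there is a path from $x$ to $y$. A left-connected rule is a span $L\xleftarrow{[i_L,o_L]}I+O\xrightarrow{[i_R,o_R]}R$ with $I,O$ discrete, $I\to L\leftarrow O$ and $I\to R\leftarrow O$ ma-cospans, $[i_L,o_L]$ mono and $L$ strongly connected; a left-connected rewriting system is a finite set of such rules. A convex match is a mono $m\colon L\to G$ such that every path in $G$ between two nodes of $m(L)$ has all its hyperedges in $m(L)$. A derivation between ma-cospans $n\to G\leftarrow m$ and $n\to H\leftarrow m$ via a rule $L\leftarrow K\to R$ is given by a convex match $L\to G$ and a double-pushout diagram $L\leftarrow K\to R$ over $G\leftarrow C\to H$ with both squares pushouts (the left one a boundary complement, automatic for left-connected systems) commuting with the interface $n+m$; for left-connected systems mono matches are automatically convex and pushout complements exist uniquely. A pre-critical pair consists of two derivations, via rules with left-hand sides $L_1,L_2$, from a common ma-cospan $n\to S\leftarrow m$ with matches $m_1,m_2$ such that $[m_1,m_2]\colon L_1+L_2\to S$ is epi. A gluing scheme for $L_1,L_2$ is a $\Sigma$-hypergraph $G$ with morphisms $g_1,g_2\colon G\to L_1+L_2$; its gluing is the coequaliser $\epsilon\colon L_1+L_2\to S=\mathtt{coeq}(g_1,g_2)$. Two nodes (or hyperedges) $x,x'$ of $L_1+L_2$ are glued if some node (hyperedge)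 $y$ of $G$ has $g_1(y)=x$, $g_2(y)=x'$. The gluing scheme yields a pre-critical pair if $\iota_1;\epsilon$ and $\iota_2;\epsilon$ are mono and $in(S)\xrightarrow{\subseteq}S\xleftarrow{\subseteq}out(S)$ is an ma-cospan; the pre-critical pair is then formed by the (unique) derivations from this ma-cospan with matches $\iota_1;\epsilon$ and $\iota_2;\epsilon$. *)

theory Defs
  imports Main
begin

record ('v, 'e, 'x) hgraph =
  nodes :: "'v set"
  edges :: "'e set"
  src   :: "'e \<Rightarrow> 'v list"
  tgt   :: "'e \<Rightarrow> 'v list"
  lab   :: "'e \<Rightarrow> 'x"

definition wf_hgraph :: "('x \<times> nat \<times> nat) set \<Rightarrow> ('v, 'e, 'x) hgraph \<Rightarrow> bool" where
  "wf_hgraph \<Sigma> H \<longleftrightarrow> finite (nodes H) \<and> finite (edges H) \<and>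
     (\<forall>e \<in> edges H. set (src H e) \<subseteq> nodes H \<and> set (tgt H e) \<subseteq> nodes H \<and>
        (lab H e, length (src H e), length (tgt H e)) \<in> \<Sigma>)"

definition hom :: "('x \<times> nat \<times> nat) set \<Rightarrow> ('v, 'e, 'x) hgraph \<Rightarrow> ('w, 'f, 'x) hgraph
     \<Rightarrow> ('v \<Rightarrow> 'w) \<times> ('e \<Rightarrow> 'f) \<Rightarrow> bool" where
  "hom \<Sigma> G H f \<longleftrightarrow> wf_hgraph \<Sigma> G \<and> wf_hgraph \<Sigma> H \<and>
     (\<forall>v \<in> nodes G. fst f v \<in> nodes H) \<and> (\<forall>e \<in> edges G. snd f e \<in> edges H) \<and>
     (\<forall>e \<in> edges G. src H (snd f e) = map (fst f) (src G e) \<and>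
                    tgt H (snd f e) = map (fst f) (tgt G e) \<and>
                    lab H (snd f e) = lab G e)"

definition indeg :: "('v, 'e, 'x) hgraph \<Rightarrow> 'v \<Rightarrow> nat" where
  "indeg H v = card {(e, i). e \<in> edges H \<and> i < length (tgt H e) \<and> tgt H e ! i = v}"

definition outdeg :: "('v, 'e, 'x) hgraph \<Rightarrow> 'v \<Rightarrow> nat" where
  "outdeg H v = card {(e, i). e \<in> edges H \<and> i < length (src H e) \<and> src H e ! i = v}"

definition in_nodes :: "('v, 'e, 'x) hgraph \<Rightarrow> 'v set" where
  "in_nodes H = {v \<in> nodes H. indeg H v = 0}"

definition out_nodes :: "('v, 'e, 'x) hgraph \<Rightarrow> 'v set" where
  "out_nodes H = {v \<in> nodes H. outdeg H v = 0}"

definition is_path :: "('v, 'e, 'x) hgraph \<Rightarrow> 'e list \<Rightarrow> bool" where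
  "is_path H es \<longleftrightarrow> es \<noteq> [] \<and> set es \<subseteq> edges H \<and>
     (\<forall>k. Suc k < length es \<longrightarrow> (\<exists>v. v \<in> set (tgt H (es ! k)) \<and> v \<in> set (src H (es ! Suc k))))"

definition path_from :: "('v, 'e, 'x) hgraph \<Rightarrow> 'v \<Rightarrow> 'v \<Rightarrow> 'e list \<Rightarrow> bool" where
  "path_from H v v' es \<longleftrightarrow> is_path H es \<and> v \<in> set (src H (hd es)) \<and> v' \<in> set (tgt H (last es))"

definition is_cycle :: "('v, 'e, 'x) hgraph \<Rightarrow> 'e list \<Rightarrow> bool" where
  "is_cycle H es \<longleftrightarrow> is_path H es \<and> (\<exists>v. v \<in> set (src H (hd es)) \<and> v \<in> set (tgt H (last es)))"

definition ma :: "('v, 'e, 'x) hgraph \<Rightarrow> bool" where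
  "ma H \<longleftrightarrow> (\<nexists>es. is_cycle H es) \<and> (\<forall>v \<in> nodes H. indeg H v \<le> 1 \<and> outdeg H v \<le> 1)"

text \<open>ma-cospan \<open>I \<rightarrow> H \<leftarrow> O\<close> with I, O discrete (represented by their finite node sets;
  a morphism out of a discrete hypergraph is just a node map).\<close>
definition ma_cospan :: "('x \<times> nat \<times> nat) set \<Rightarrow> 'i set \<Rightarrow> ('i \<Rightarrow> 'v) \<Rightarrow> ('v, 'e, 'x) hgraph
     \<Rightarrow> ('j \<Rightarrow> 'v) \<Rightarrow> 'j set \<Rightarrow> bool" where
  "ma_cospan \<Sigma> I i H ot Ot \<longleftrightarrow> wf_hgraph \<Sigma> H \<and> finite I \<and> finite Ot \<and>
     i ` I \<subseteq> nodes H \<and> ot ` Ot \<subseteq> nodes H \<and> inj_on i I \<and> inj_on ot Ot \<and>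
     i ` I = in_nodes H \<and> ot ` Ot = out_nodes H \<and> ma H"

definition strongly_connected :: "('v, 'e, 'x) hgraph \<Rightarrow> bool" where
  "strongly_connected H \<longleftrightarrow> (\<forall>x \<in> in_nodes H. \<forall>y \<in> out_nodes H. \<exists>es. path_from H x y es)"

record ('i, 'v, 'e, 'x) rule =
  r_I  :: "'i set"
  r_O  :: "'i set"
  r_L  :: "('v, 'e, 'x) hgraph"
  r_R  :: "('v, 'e, 'x) hgraph"
  r_iL :: "'i \<Rightarrow> 'v"
  r_oL :: "'i \<Rightarrow> 'v"
  r_iR :: "'i \<Rightarrow> 'v"
  r_oR :: "'i \<Rightarrow> 'v"

definition left_connected_rule :: "('x \<times> nat \<times> nat) set \<Rightarrow> ('i, 'v, 'e, 'x) rule \<Rightarrow> bool" where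
  "left_connected_rule \<Sigma> r \<longleftrightarrow>
     ma_cospan \<Sigma> (r_I r) (r_iL r) (r_L r) (r_oL r) (r_O r) \<and>
     ma_cospan \<Sigma> (r_I r) (r_iR r) (r_R r) (r_oR r) (r_O r) \<and>
     inj_on (case_sum (r_iL r) (r_oL r)) (r_I r <+> r_O r) \<and>
     strongly_connected (r_L r)"

definition left_connected_system :: "('x \<times> nat \<times> nat) set \<Rightarrow> ('i, 'v, 'e, 'x) rule set \<Rightarrow> bool" where
  "left_connected_system \<Sigma> \<R> \<longleftrightarrow> finite \<R> \<and> (\<forall>r \<in> \<R>. left_connected_rule \<Sigma> r)"

definition hsum :: "('v, 'e, 'x) hgraph \<Rightarrow> ('w, 'f, 'x) hgraph \<Rightarrow> ('v + 'w, 'e + 'f, 'x) hgraph" where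
  "hsum A B = \<lparr> nodes = nodes A <+> nodes B, edges = edges A <+> edges B,
      src = case_sum (map Inl \<circ> src A) (map Inr \<circ> src B),
      tgt = case_sum (map Inl \<circ> tgt A) (map Inr \<circ> tgt B),
      lab = case_sum (lab A) (lab B) \<rparr>"

definition coeq_node_rel :: "('a, 'b, 'x) hgraph \<Rightarrow> ('a \<Rightarrow> 'v) \<times> ('b \<Rightarrow> 'e) \<Rightarrow> ('a \<Rightarrow> 'v) \<times> ('b \<Rightarrow> 'e) \<Rightarrow> 'v rel" where
  "coeq_node_rel G g1 g2 =
     (let R = {(fst g1 y, fst g2 y) | y. y \<in> nodes G} in (R \<union> R\<inverse>)\<^sup>*)"

definition coeq_edge_rel :: "('a, 'b, 'x) hgraph \<Rightarrow> ('a \<Rightarrow> 'v) \<times> ('b \<Rightarrow> 'e) \<Rightarrow> ('a \<Rightarrow> 'v) \<times> ('b \<Rightarrow> 'e) \<Rightarrow> 'e rel" where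
  "coeq_edge_rel G g1 g2 =
     (let R = {(snd g1 y, snd g2 y) | y. y \<in> edges G} in (R \<union> R\<inverse>)\<^sup>*)"

definition coeq_map :: "('a, 'b, 'x) hgraph \<Rightarrow> ('a \<Rightarrow> 'v) \<times> ('b \<Rightarrow> 'e) \<Rightarrow> ('a \<Rightarrow> 'v) \<times> ('b \<Rightarrow> 'e)
     \<Rightarrow> ('v \<Rightarrow> 'v set) \<times> ('e \<Rightarrow> 'e set)" where
  "coeq_map G g1 g2 = (\<lambda>v. coeq_node_rel G g1 g2 `` {v}, \<lambda>e. coeq_edge_rel G g1 g2 `` {e})"

definition coeq :: "('a, 'b, 'x) hgraph \<Rightarrow> ('v, 'e, 'x) hgraph \<Rightarrow> ('a \<Rightarrow> 'v) \<times> ('b \<Rightarrow> 'e)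
     \<Rightarrow> ('a \<Rightarrow> 'v) \<times> ('b \<Rightarrow> 'e) \<Rightarrow> ('v set, 'e set, 'x) hgraph" where
  "coeq G H g1 g2 =
     (let \<epsilon> = coeq_map G g1 g2 in
      \<lparr> nodes = fst \<epsilon> ` nodes H, edges = snd \<epsilon> ` edges H,
        src = (\<lambda>c. map (fst \<epsilon>) (src H (SOME e. e \<in> c))),
        tgt = (\<lambda>c. map (fst \<epsilon>) (tgt H (SOME e. e \<in> c))),
        lab = (\<lambda>c. lab H (SOME e. e \<in> c)) \<rparr>)"

definition gluing_scheme :: "('x \<times> nat \<times> nat) set \<Rightarrow> ('v, 'e, 'x) hgraph \<Rightarrow> ('v, 'e, 'x) hgraph
     \<Rightarrow> ('a, 'b, 'x) hgraph \<Rightarrow> ('a \<Rightarrow> 'v + 'v) \<times> ('b \<Rightarrow> 'e + 'e) \<Rightarrow> ('a \<Rightarrow> 'v + 'v) \<times> ('b \<Rightarrow> 'e + 'e) \<Rightarrow> bool" where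
  "gluing_scheme \<Sigma> L1 L2 G g1 g2 \<longleftrightarrow> hom \<Sigma> G (hsum L1 L2) g1 \<and> hom \<Sigma> G (hsum L1 L2) g2"

definition glued_nodes :: "('a, 'b, 'x) hgraph \<Rightarrow> ('a \<Rightarrow> 'v) \<times> ('b \<Rightarrow> 'e) \<Rightarrow> ('a \<Rightarrow> 'v) \<times> ('b \<Rightarrow> 'e)
     \<Rightarrow> 'v \<Rightarrow> 'v \<Rightarrow> bool" where
  "glued_nodes G g1 g2 x x' \<longleftrightarrow> (\<exists>y \<in> nodes G. fst g1 y = x \<and> fst g2 y = x')"

definition yields_pre_critical_pair :: "('x \<times> nat \<times> nat) set \<Rightarrow> ('v, 'e, 'x) hgraph \<Rightarrow> ('v, 'e, 'x) hgraph
     \<Rightarrow> ('a, 'b, 'x) hgraph \<Rightarrow> ('a \<Rightarrow> 'v + 'v) \<times> ('b \<Rightarrow> 'e + 'e) \<Rightarrow> ('a \<Rightarrow> 'v + 'v) \<times> ('b \<Rightarrow> 'e + 'e) \<Rightarrow> bool" where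
  "yields_pre_critical_pair \<Sigma> L1 L2 G g1 g2 \<longleftrightarrow>
     (let \<epsilon> = coeq_map G g1 g2; S = coeq G (hsum L1 L2) g1 g2 in
       inj_on (fst \<epsilon> \<circ> Inl) (nodes L1) \<and> inj_on (snd \<epsilon> \<circ> Inl) (edges L1) \<and>
       inj_on (fst \<epsilon> \<circ> Inr) (nodes L2) \<and> inj_on (snd \<epsilon> \<circ> Inr) (edges L2) \<and>
       ma_cospan \<Sigma> (in_nodes S) id S id (out_nodes S))"

end

theory Submission
  imports Defs
begin

text \<open>Suppose node \<open>A\<close> of \<open>L\<^sub>1\<close> is glued to \<open>B\<close> of \<open>L\<^sub>2\<close> with \<open>A\<close> an output
  and \<open>B\<close> an input, and an input \<open>C\<close> of \<open>L\<^sub>1\<close> is glued to an output \<open>D\<close> of \<open>L\<^sub>2\<close>.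
  Strong connectivity gives paths \<open>C \<leadsto> A\<close> in \<open>L\<^sub>1\<close> and \<open>B \<leadsto> D\<close> in \<open>L\<^sub>2\<close>; the
  coequaliser maps them to paths of the glued hypergraph \<open>S\<close> which compose to a
  cycle through the image of \<open>C = D\<close>, contradicting acyclicity of \<open>S\<close>. The second
  claim is the same argument with the roles of inputs and outputs exchanged.\<close>

definition preserves_incidence ::
    "('v, 'e, 'x) hgraph \<Rightarrow> ('w, 'f, 'y) hgraph \<Rightarrow> ('v \<Rightarrow> 'w) \<Rightarrow> ('e \<Rightarrow> 'f) \<Rightarrow> bool" where
  "preserves_incidence L S h f \<longleftrightarrow>
     (\<forall>e \<in> edges L. f e \<in> edges S \<and> src S (f e) = map h (src L e) \<and> tgt S (f e) = map h (tgt L e))"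

lemma preserves_incidence_comp:
  assumes "preserves_incidence L M h f" and "preserves_incidence M S h' f'"
  shows "preserves_incidence L S (h' \<circ> h) (f' \<circ> f)"
  using assms unfolding preserves_incidence_def by auto

lemma preserves_incidence_Inl: "preserves_incidence L1 (hsum L1 L2) Inl Inl"
  unfolding preserves_incidence_def hsum_def by auto

lemma preserves_incidence_Inr: "preserves_incidence L2 (hsum L1 L2) Inr Inr"
  unfolding preserves_incidence_def hsum_def by auto

lemma path_from_preserves_incidence:
  assumes p: "path_from L x y es" and f: "preserves_incidence L S h f"
  shows "path_from S (h x) (h y) (map f es)"
proof -
  have es: "es \<noteq> []" "set es \<subseteq> edges L" using p unfolding path_from_def is_path_def by auto
  have f_edge: "f e \<in> edges S" "src S (f e) = map h (src L e)" "tgt S (f e) = map h (tgt L e)"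
    if "e \<in> edges L" for e
    using f that unfolding preserves_incidence_def by auto
  have "\<exists>v. v \<in> set (tgt S (map f es ! k)) \<and> v \<in> set (src S (map f es ! Suc k))"
    if k: "Suc k < length es" for k
  proof -
    obtain v where "v \<in> set (tgt L (es ! k))" "v \<in> set (src L (es ! Suc k))"
      using p k unfolding path_from_def is_path_def by blast
    moreover have "es ! k \<in> edges L" "es ! Suc k \<in> edges L" using es k by auto
    ultimately show ?thesis using k by (intro exI[of _ "h v"]) (simp add: f_edge)
  qed
  moreover have "hd es \<in> edges L" "last es \<in> edges L" using es by auto
  ultimately show ?thesis
    using p es unfolding path_from_def is_path_def by (auto simp: f_edge hd_map last_map)
qed

lemma path_from_append:
  assumes p: "path_from S x y xs" and q: "path_from S y z ys"
  shows "path_from S x z (xs @ ys)"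
proof -
  have ne: "xs \<noteq> []" "ys \<noteq> []" using p q unfolding path_from_def is_path_def by auto
  have "\<exists>v. v \<in> set (tgt S ((xs @ ys) ! k)) \<and> v \<in> set (src S ((xs @ ys) ! Suc k))"
    if k: "Suc k < length (xs @ ys)" for k
  proof -
    consider "Suc k < length xs" | "Suc k = length xs" | "Suc k > length xs" by linarith
    then show ?thesis
    proof cases
      case 1
      then show ?thesis using p unfolding path_from_def is_path_def by (simp add: nth_append)
    next
      case 2
      then have "k = length xs - 1" by simp
      then have "xs ! k = last xs" "(xs @ ys) ! Suc k = hd ys"
        using 2 ne by (auto simp: last_conv_nth hd_conv_nth nth_append)
      then show ?thesis using 2 p q unfolding path_from_def by (auto simp: nth_append)
    next
      case 3
      then obtain m where m: "k = length xs + m" by (metis less_Suc_eq_le le_Suc_ex)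
      then show ?thesis using k q unfolding path_from_def is_path_def by (auto simp: nth_append)
    qed
  qed
  then show ?thesis using p q ne unfolding path_from_def is_path_def by auto
qed

lemma ma_no_round_trip:
  assumes "ma S" and "path_from S x y xs" and "path_from S y x ys"
  shows False
proof -
  have "path_from S x x (xs @ ys)" using assms(2,3) by (rule path_from_append)
  then have "is_cycle S (xs @ ys)" unfolding path_from_def is_cycle_def by blast
  then show False using \<open>ma S\<close> unfolding ma_def by blast
qed

lemma Image_sym_rtrancl_eq:
  assumes "(a, b) \<in> (R \<union> R\<inverse>)\<^sup>*"
  shows "(R \<union> R\<inverse>)\<^sup>* `` {a} = (R \<union> R\<inverse>)\<^sup>* `` {b}"
proof -
  have "sym ((R \<union> R\<inverse>)\<^sup>*)" by (intro sym_rtrancl sym_Un_converse)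
  then have "(b, a) \<in> (R \<union> R\<inverse>)\<^sup>*" using assms by (meson symD)
  then show ?thesis using assms by (auto intro: rtrancl_trans)
qed

lemma coeq_map_identifies_glued_nodes:
  assumes "glued_nodes G g1 g2 X Y"
  shows "fst (coeq_map G g1 g2) X = fst (coeq_map G g1 g2) Y"
proof -
  let ?R = "{(fst g1 y, fst g2 y) | y. y \<in> nodes G}"
  have "(X, Y) \<in> (?R \<union> ?R\<inverse>)\<^sup>*" using assms unfolding glued_nodes_def by blast
  from Image_sym_rtrancl_eq[OF this] show ?thesis
    unfolding coeq_map_def coeq_node_rel_def Let_def by simp
qed

text \<open>Hyperedges identified by the coequaliser have the same sources and targets up to
  the node map; this is what makes the choice of representative in \<open>coeq\<close> harmless.\<close>
lemma coeq_edge_rel_incidence_eq: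
  assumes h1: "hom \<Sigma> G H g1" and h2: "hom \<Sigma> G H g2"
    and r: "(e, e') \<in> coeq_edge_rel G g1 g2"
  defines "\<epsilon> \<equiv> fst (coeq_map G g1 g2)"
  shows "map \<epsilon> (src H e) = map \<epsilon> (src H e') \<and> map \<epsilon> (tgt H e) = map \<epsilon> (tgt H e')"
proof -
  have glued_edge: "map \<epsilon> (src H (snd g1 y)) = map \<epsilon> (src H (snd g2 y))
      \<and> map \<epsilon> (tgt H (snd g1 y)) = map \<epsilon> (tgt H (snd g2 y))" if y: "y \<in> edges G" for y
  proof -
    have "set (src G y) \<subseteq> nodes G" "set (tgt G y) \<subseteq> nodes G"
      using h1 y unfolding hom_def wf_hgraph_def by auto
    moreover have "\<epsilon> (fst g1 v) = \<epsilon> (fst g2 v)" if "v \<in> nodes G" for v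
      unfolding \<epsilon>_def using that by (intro coeq_map_identifies_glued_nodes) (auto simp: glued_nodes_def)
    moreover have "src H (snd g1 y) = map (fst g1) (src G y)" "tgt H (snd g1 y) = map (fst g1) (tgt G y)"
      "src H (snd g2 y) = map (fst g2) (src G y)" "tgt H (snd g2 y) = map (fst g2) (tgt G y)"
      using h1 h2 y unfolding hom_def by auto
    ultimately show ?thesis by (auto intro!: map_cong)
  qed
  let ?R = "{(snd g1 y, snd g2 y) | y. y \<in> edges G}"
  have "(e, e') \<in> (?R \<union> ?R\<inverse>)\<^sup>*" using r unfolding coeq_edge_rel_def Let_def by simp
  then show ?thesis
  proof (induction rule: rtrancl_induct)
    case base
    then show ?case by simp
  next
    case (step b c)
    then show ?case using glued_edge by auto
  qed
qed

lemma preserves_incidence_coeq_map: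
  assumes h1: "hom \<Sigma> G H g1" and h2: "hom \<Sigma> G H g2"
  shows "preserves_incidence H (coeq G H g1 g2) (fst (coeq_map G g1 g2)) (snd (coeq_map G g1 g2))"
  unfolding preserves_incidence_def
proof
  fix e assume e: "e \<in> edges H"
  let ?E = "coeq_edge_rel G g1 g2"
  have "e \<in> ?E `` {e}" unfolding coeq_edge_rel_def Let_def by simp
  then have "(SOME e'. e' \<in> ?E `` {e}) \<in> ?E `` {e}" by (rule someI)
  then have "(e, SOME e'. e' \<in> ?E `` {e}) \<in> ?E" by simp
  from coeq_edge_rel_incidence_eq[OF h1 h2 this] e
  show "snd (coeq_map G g1 g2) e \<in> edges (coeq G H g1 g2)
    \<and> src (coeq G H g1 g2) (snd (coeq_map G g1 g2) e) = map (fst (coeq_map G g1 g2)) (src H e)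
    \<and> tgt (coeq G H g1 g2) (snd (coeq_map G g1 g2) e) = map (fst (coeq_map G g1 g2)) (tgt H e)"
    by (simp add: coeq_def Let_def coeq_map_def)
qed

lemma glued_paths_not_ma:
  assumes "gluing_scheme \<Sigma> L1 L2 G g1 g2"
    and "path_from L1 x y es1" and "path_from L2 u w es2"
    and "glued_nodes G g1 g2 (Inl y) (Inr u)" and "glued_nodes G g1 g2 (Inl x) (Inr w)"
  shows "\<not> ma (coeq G (hsum L1 L2) g1 g2)"
proof
  let ?\<epsilon> = "coeq_map G g1 g2"
  assume ma: "ma (coeq G (hsum L1 L2) g1 g2)"
  have \<epsilon>: "preserves_incidence (hsum L1 L2) (coeq G (hsum L1 L2) g1 g2) (fst ?\<epsilon>) (snd ?\<epsilon>)"
    using assms(1) unfolding gluing_scheme_def by (blast intro: preserves_incidence_coeq_map)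
  have "path_from (coeq G (hsum L1 L2) g1 g2) (fst ?\<epsilon> (Inl x)) (fst ?\<epsilon> (Inl y)) (map (snd ?\<epsilon> \<circ> Inl) es1)"
    using path_from_preserves_incidence[OF assms(2) preserves_incidence_comp[OF preserves_incidence_Inl \<epsilon>]]
    by simp
  moreover have "path_from (coeq G (hsum L1 L2) g1 g2) (fst ?\<epsilon> (Inr u)) (fst ?\<epsilon> (Inr w)) (map (snd ?\<epsilon> \<circ> Inr) es2)"
    using path_from_preserves_incidence[OF assms(3) preserves_incidence_comp[OF preserves_incidence_Inr \<epsilon>]]
    by simp
  ultimately show False
    using ma_no_round_trip[OF ma] coeq_map_identifies_glued_nodes[OF assms(4)]
      coeq_map_identifies_glued_nodes[OF assms(5)] by metis
qed

theorem mainTheorem3: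
  fixes \<Sigma> :: "('x \<times> nat \<times> nat) set"
    and \<R> :: "('i, 'v, 'e, 'x) rule set"
    and r1 r2 :: "('i, 'v, 'e, 'x) rule"
    and G :: "('a, 'b, 'x) hgraph"
    and g1 g2 :: "('a \<Rightarrow> 'v + 'v) \<times> ('b \<Rightarrow> 'e + 'e)"
    and A B :: 'v
  assumes "left_connected_system \<Sigma> \<R>"
    and "r1 \<in> \<R>" and "r2 \<in> \<R>"
    and "wf_hgraph \<Sigma> G"
    and "gluing_scheme \<Sigma> (r_L r1) (r_L r2) G g1 g2"
    and "yields_pre_critical_pair \<Sigma> (r_L r1) (r_L r2) G g1 g2"
    and "A \<in> nodes (r_L r1)" and "B \<in> nodes (r_L r2)"
    and "glued_nodes G g1 g2 (Inl A) (Inr B)"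
  shows "(A \<in> out_nodes (r_L r1) \<and> B \<in> in_nodes (r_L r2) \<longrightarrow>
            \<not> (\<exists>C \<in> in_nodes (r_L r1). \<exists>D \<in> out_nodes (r_L r2). glued_nodes G g1 g2 (Inl C) (Inr D)))
       \<and> (A \<in> in_nodes (r_L r1) \<and> B \<in> out_nodes (r_L r2) \<longrightarrow>
            \<not> (\<exists>C \<in> out_nodes (r_L r1). \<exists>D \<in> in_nodes (r_L r2). glued_nodes G g1 g2 (Inl C) (Inr D)))"
proof -
  have ma: "ma (coeq G (hsum (r_L r1) (r_L r2)) g1 g2)"
    using assms(6) unfolding yields_pre_critical_pair_def Let_def ma_cospan_def by simp
  have "strongly_connected (r_L r1)" "strongly_connected (r_L r2)"
    using assms(1-3) unfolding left_connected_system_def left_connected_rule_def by auto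
  note sc = this[unfolded strongly_connected_def]
  show ?thesis
  proof (intro conjI impI notI)
    assume "A \<in> out_nodes (r_L r1) \<and> B \<in> in_nodes (r_L r2)"
      and "\<exists>C \<in> in_nodes (r_L r1). \<exists>D \<in> out_nodes (r_L r2). glued_nodes G g1 g2 (Inl C) (Inr D)"
    then obtain C D es1 es2 where "path_from (r_L r1) C A es1" "path_from (r_L r2) B D es2"
      and "glued_nodes G g1 g2 (Inl C) (Inr D)"
      using sc by blast
    with glued_paths_not_ma[OF assms(5)] assms(9) ma show False by blast
  next
    assume "A \<in> in_nodes (r_L r1) \<and> B \<in> out_nodes (r_L r2)"
      and "\<exists>C \<in> out_nodes (r_L r1). \<exists>D \<in> in_nodes (r_L r2). glued_nodes G g1 g2 (Inl C) (Inr D)"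
    then obtain C D es1 es2 where "path_from (r_L r1) A C es1" "path_from (r_L r2) D B es2"
      and "glued_nodes G g1 g2 (Inl C) (Inr D)"
      using sc by blast
    with glued_paths_not_ma[OF assms(5)] assms(9) ma show False by blast
  qed
qed

end
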